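(* Let $G=(V,E)$ be a finite, connected, simple graph with generic weights $(w_x)_{x\in V\cup E}$ and ground state $M$. Let $v\in V$ and $e\in E$. If $e=(u,v)$ is inaccessible, then $e\notin M$. If $O(v)<0$, then $v\in M$.
   Context: A matching of $G$ is a set $M\subset V\cup E$ such that every vertex either belongs to $M$ or is an endpoint of exactly one edge of $M$, but not both; $H(M)=\sum_{x\in M}w_x$ and the ground state is the matching of minimal weight. Weights are generic if no nontrivial integer combination of finitely many weights vanishes. The optimality of a vertex $v$ is $O(v)=\max_{u\sim v}(w_u+w_v-w_{(u,v)})$, the maximum over neighbours $u$ of $v$. An edge $e=(u,v)$ is inaccessible if $w_e>w_u+w_v$. *)

theory Defs
  imports Complex_Main
begin

text \<open>Weights live on V \<union> E, encoded as
  elements of the sum type: Inl v for a vertex, Inr e for an edge.\<close>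

definition simple_graph :: "'v set \<Rightarrow> 'v set set \<Rightarrow> bool" where
  "simple_graph V E \<longleftrightarrow> finite V \<and>
     (\<forall>e\<in>E. \<exists>u v. e = {u, v} \<and> u \<noteq> v \<and> u \<in> V \<and> v \<in> V)"

definition connected_graph :: "'v set \<Rightarrow> 'v set set \<Rightarrow> bool" where
  "connected_graph V E \<longleftrightarrow> V \<noteq> {} \<and>
     (\<forall>u\<in>V. \<forall>v\<in>V. (\<lambda>x y. {x, y} \<in> E)\<^sup>*\<^sup>* u v)"

definition sites :: "'v set \<Rightarrow> 'v set set \<Rightarrow> ('v + 'v set) set" where
  "sites V E = Inl ` V \<union> Inr ` E"

definition generic_weights :: "'v set \<Rightarrow> 'v set set \<Rightarrow> ('v + 'v set \<Rightarrow> real) \<Rightarrow> bool" where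
  "generic_weights V E w \<longleftrightarrow>
     (\<forall>c :: ('v + 'v set) \<Rightarrow> int. \<forall>F. finite F \<longrightarrow> F \<subseteq> sites V E \<longrightarrow>
        (\<Sum>x\<in>F. real_of_int (c x) * w x) = 0 \<longrightarrow> (\<forall>x\<in>F. c x = 0))"

definition is_matching :: "'v set \<Rightarrow> 'v set set \<Rightarrow> ('v + 'v set) set \<Rightarrow> bool" where
  "is_matching V E M \<longleftrightarrow> M \<subseteq> sites V E \<and>
     (\<forall>v\<in>V. (Inl v \<in> M \<and> card {e\<in>E. v \<in> e \<and> Inr e \<in> M} = 0) \<or>
             (Inl v \<notin> M \<and> card {e\<in>E. v \<in> e \<and> Inr e \<in> M} = 1))"

definition H :: "('v + 'v set \<Rightarrow> real) \<Rightarrow> ('v + 'v set) set \<Rightarrow> real" where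
  "H w M = (\<Sum>x\<in>M. w x)"

definition ground_state :: "'v set \<Rightarrow> 'v set set \<Rightarrow> ('v + 'v set \<Rightarrow> real) \<Rightarrow> ('v + 'v set) set \<Rightarrow> bool" where
  "ground_state V E w M \<longleftrightarrow> is_matching V E M \<and>
     (\<forall>M'. is_matching V E M' \<longrightarrow> H w M \<le> H w M')"

definition optimality :: "'v set set \<Rightarrow> ('v + 'v set \<Rightarrow> real) \<Rightarrow> 'v \<Rightarrow> real" where
  "optimality E w v = Max {w (Inl u) + w (Inl v) - w (Inr {u, v}) | u. {u, v} \<in> E}"

definition inaccessible :: "('v + 'v set \<Rightarrow> real) \<Rightarrow> 'v set \<Rightarrow> bool" where
  "inaccessible w e \<longleftrightarrow> (\<exists>u v. e = {u, v} \<and> u \<noteq> v \<and> w (Inr e) > w (Inl u) + w (Inl v))"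

end

theory Submission
  imports Defs
begin

text \<open>If an inaccessible edge
  \<open>{a, b}\<close> were in the ground state, replacing it by the two vertices \<open>a\<close> and \<open>b\<close>
  would give a matching of strictly smaller weight. If \<open>O(v) < 0\<close> and \<open>v\<close> were
  not in the ground state, \<open>v\<close> would be covered by an edge \<open>{u, v}\<close>, and
  \<open>w\<^sub>u + w\<^sub>v - w\<^sub>u\<^sub>v \<le> O(v) < 0\<close> makes that edge inaccessible.\<close>

lemma simple_graph_edge_other_end:
  assumes "simple_graph V E" and "e \<in> E" and "v \<in> e"
  obtains u where "e = {u, v}" and "u \<noteq> v" and "u \<in> V" and "v \<in> V"
  using assms unfolding simple_graph_def by (metis doubleton_eq_iff insertE singletonD)

lemma simple_graph_edge_subset:
  assumes "simple_graph V E" and "e \<in> E"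
  shows "e \<subseteq> V"
  using assms simple_graph_edge_other_end by (metis subsetI)

lemma simple_graph_finite_edges:
  assumes "simple_graph V E"
  shows "finite E"
proof -
  have "E \<subseteq> Pow V" using assms simple_graph_edge_subset by blast
  moreover have "finite V" using assms unfolding simple_graph_def by blast
  ultimately show ?thesis by (meson finite_Pow_iff finite_subset)
qed

lemma simple_graph_finite_sites:
  assumes "simple_graph V E"
  shows "finite (sites V E)"
  using assms simple_graph_finite_edges unfolding simple_graph_def sites_def by blast

lemma matching_finite:
  assumes "simple_graph V E" and "is_matching V E M"
  shows "finite M"
  using assms simple_graph_finite_sites finite_subset unfolding is_matching_def by blast

lemma matching_uncovered_vertex:
  assumes "is_matching V E M" and "v \<in> V" and "Inl v \<notin> M"
  obtains f where "f \<in> E" and "v \<in> f" and "Inr f \<in> M"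
proof -
  have "card {f\<in>E. v \<in> f \<and> Inr f \<in> M} = 1"
    using assms unfolding is_matching_def by auto
  then obtain f where "{f\<in>E. v \<in> f \<and> Inr f \<in> M} = {f}" by (rule card_1_singletonE)
  then show ?thesis using that by blast
qed

lemma matching_edge_endpoint:
  assumes "simple_graph V E" and "is_matching V E M"
    and "e \<in> E" and "Inr e \<in> M" and "x \<in> e"
  shows "Inl x \<notin> M" and "{f\<in>E. x \<in> f \<and> Inr f \<in> M} = {e}"
proof -
  let ?C = "{f\<in>E. x \<in> f \<and> Inr f \<in> M}"
  have "x \<in> V" using assms simple_graph_edge_subset by blast
  then have "(Inl x \<in> M \<and> card ?C = 0) \<or> (Inl x \<notin> M \<and> card ?C = 1)"
    using assms(2) unfolding is_matching_def by blast
  moreover have "e \<in> ?C" using assms by blast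
  moreover have "finite ?C" using simple_graph_finite_edges[OF assms(1)] by simp
  ultimately have "Inl x \<notin> M" and "card ?C = 1" by auto
  then show "Inl x \<notin> M" and "?C = {e}"
    using \<open>e \<in> ?C\<close> by (metis card_1_singletonE singletonD)+
qed

lemma matching_split_edge:
  assumes "simple_graph V E" and "is_matching V E M"
    and "{a, b} \<in> E" and "Inr {a, b} \<in> M"
  shows "is_matching V E (M - {Inr {a, b}} \<union> {Inl a, Inl b})"
    (is "is_matching V E ?M'")
  unfolding is_matching_def
proof (intro conjI ballI)
  have "a \<in> V" "b \<in> V" using assms simple_graph_edge_subset by blast+
  then show "?M' \<subseteq> sites V E" using assms(2) unfolding is_matching_def sites_def by auto
next
  fix y assume "y \<in> V"
  let ?C = "\<lambda>N. {f\<in>E. y \<in> f \<and> Inr f \<in> N}"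
  have C_M': "?C ?M' = ?C M - {{a, b}}" by auto
  show "(Inl y \<in> ?M' \<and> card (?C ?M') = 0) \<or> (Inl y \<notin> ?M' \<and> card (?C ?M') = 1)"
  proof (cases "y \<in> {a, b}")
    case True
    then have "?C M = {{a, b}}" using matching_edge_endpoint(2)[OF assms] by blast
    then have "?C ?M' = {}" using C_M' by blast
    moreover have "Inl y \<in> ?M'" using True by blast
    ultimately show ?thesis by (metis card.empty)
  next
    case False
    then have "?C ?M' = ?C M" and "Inl y \<in> ?M' \<longleftrightarrow> Inl y \<in> M"
      using C_M' by auto
    with assms(2) \<open>y \<in> V\<close> show ?thesis unfolding is_matching_def by simp
  qed
qed

lemma H_split_edge:
  assumes "finite M" and "Inr {a, b} \<in> M" and "a \<noteq> b"
    and "Inl a \<notin> M" and "Inl b \<notin> M"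
  shows "H w (M - {Inr {a, b}} \<union> {Inl a, Inl b})
         = H w M - w (Inr {a, b}) + w (Inl a) + w (Inl b)"
proof -
  have "H w (M - {Inr {a, b}} \<union> {Inl a, Inl b})
        = (\<Sum>x\<in>M - {Inr {a, b}}. w x) + (\<Sum>x\<in>{Inl a, Inl b}. w x)"
    unfolding H_def using assms by (intro sum.union_disjoint) auto
  also have "\<dots> = H w M - w (Inr {a, b}) + w (Inl a) + w (Inl b)"
    unfolding H_def using assms by (simp add: sum_diff1)
  finally show ?thesis .
qed

lemma ground_state_excludes_inaccessible:
  assumes "simple_graph V E" and "ground_state V E w M"
    and "e \<in> E" and "inaccessible w e"
  shows "Inr e \<notin> M"
proof
  assume "Inr e \<in> M"
  obtain a b where e: "e = {a, b}" and "a \<noteq> b"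
    and heavy: "w (Inr e) > w (Inl a) + w (Inl b)"
    using assms(4) unfolding inaccessible_def by blast
  have matching: "is_matching V E M" using assms(2) unfolding ground_state_def by blast
  have "Inl a \<notin> M" and "Inl b \<notin> M"
    using matching_edge_endpoint(1)[OF assms(1) matching assms(3) \<open>Inr e \<in> M\<close>] e by auto
  then have "H w (M - {Inr e} \<union> {Inl a, Inl b}) < H w M"
    using H_split_edge matching_finite[OF assms(1) matching] \<open>Inr e \<in> M\<close> \<open>a \<noteq> b\<close> heavy e
    by fastforce
  moreover have "is_matching V E (M - {Inr e} \<union> {Inl a, Inl b})"
    using matching_split_edge[OF assms(1) matching] assms(3) \<open>Inr e \<in> M\<close> e by blast
  ultimately show False using assms(2) unfolding ground_state_def by fastforce
qed

lemma optimality_ge: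
  assumes "simple_graph V E" and "{u, v} \<in> E"
  shows "w (Inl u) + w (Inl v) - w (Inr {u, v}) \<le> optimality E w v"
proof -
  have "{x. {x, v} \<in> E} \<subseteq> V"
    using assms(1) simple_graph_edge_subset by blast
  then have "finite {x. {x, v} \<in> E}"
    using assms(1) finite_subset unfolding simple_graph_def by blast
  then have "finite {w (Inl x) + w (Inl v) - w (Inr {x, v}) | x. {x, v} \<in> E}"
    by (simp add: setcompr_eq_image)
  then show ?thesis unfolding optimality_def using assms(2) by (intro Max_ge) auto
qed

lemma ground_state_negative_optimality:
  assumes "simple_graph V E" and "ground_state V E w M"
    and "v \<in> V" and "optimality E w v < 0"
  shows "Inl v \<in> M"
proof (rule ccontr)
  assume "Inl v \<notin> M"
  then obtain f where "f \<in> E" "v \<in> f" "Inr f \<in> M"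
    using assms(2,3) matching_uncovered_vertex unfolding ground_state_def by metis
  then obtain u where f: "f = {u, v}" and "u \<noteq> v"
    using assms(1) simple_graph_edge_other_end by metis
  have "w (Inl u) + w (Inl v) - w (Inr f) < 0"
    using optimality_ge[OF assms(1), of u v w] \<open>f \<in> E\<close> f assms(4) by simp
  then have "inaccessible w f" unfolding inaccessible_def using f \<open>u \<noteq> v\<close> by force
  then show False
    using ground_state_excludes_inaccessible assms(1,2) \<open>f \<in> E\<close> \<open>Inr f \<in> M\<close> by blast
qed

theorem lemma2p5:
  fixes V :: "'v set" and E :: "'v set set" and w :: "'v + 'v set \<Rightarrow> real"
    and M :: "('v + 'v set) set" and v :: 'v and e :: "'v set"
  assumes "simple_graph V E" and "connected_graph V E"
    and "generic_weights V E w" and "ground_state V E w M"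
    and "v \<in> V" and "e \<in> E"
  shows "(inaccessible w e \<longrightarrow> Inr e \<notin> M) \<and> (optimality E w v < 0 \<longrightarrow> Inl v \<in> M)"
  using ground_state_excludes_inaccessible[OF assms(1,4,6)]
    ground_state_negative_optimality[OF assms(1,4,5)] by blast

end
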